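(* Let $\alpha\in\mathbb R$. For every $u_0>0$ there exist $R>0$ and $u\in C^2([0,R])$ solving $$\left(\frac{r\,u'(r)}{\sqrt{1+u'(r)^2}}\right)'=\alpha\,\frac{r\,(u-ru')}{(r^2+u^2)\sqrt{1+u'^2}}\quad\text{in }(0,R),\qquad u(0)=u_0,\quad u'(0)=0.$$ Moreover, the solution depends continuously on the parameters $\alpha$ and $u_0$.
   Context: This ODE is the equation for the profile $z=u(r)$, $r=\sqrt{x^2+y^2}$, of a surface of revolution about the $z$-axis satisfying $H=\alpha\langle\nu,p\rangle/|p|^2$ (with $H$ the sum of principal curvatures), meeting the rotation axis orthogonally at $(0,0,u_0)$. *)

theory Defs
  imports "HOL-Analysis.Analysis"
begin

definition is_C2_on :: "real \<Rightarrow> (real \<Rightarrow> real) \<Rightarrow> (real \<Rightarrow> real) \<Rightarrow> (real \<Rightarrow> real) \<Rightarrow> bool" where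
  "is_C2_on R u u1 u2 \<longleftrightarrow>
     (\<forall>r\<in>{0..R}. (u has_real_derivative u1 r) (at r within {0..R})) \<and>
     (\<forall>r\<in>{0..R}. (u1 has_real_derivative u2 r) (at r within {0..R})) \<and>
     continuous_on {0..R} u2"

definition profile_solution ::
  "real \<Rightarrow> real \<Rightarrow> real \<Rightarrow> (real \<Rightarrow> real) \<Rightarrow> (real \<Rightarrow> real) \<Rightarrow> (real \<Rightarrow> real) \<Rightarrow> bool" where
  "profile_solution \<alpha> u0 R u u1 u2 \<longleftrightarrow>
     is_C2_on R u u1 u2 \<and>
     (\<forall>r\<in>{0<..<R}.
        ((\<lambda>s. s * u1 s / sqrt (1 + (u1 s)\<^sup>2)) has_real_derivative
           \<alpha> * (r * (u r - r * u1 r)) / ((r\<^sup>2 + (u r)\<^sup>2) * sqrt (1 + (u1 r)\<^sup>2))) (at r)) \<and>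
     u 0 = u0 \<and> u1 0 = 0"

end

theory Submission
  imports Defs
begin

text \<open>
  Let W = u' / sqrt (1 + u'^2) be the sine of the tangent angle of the profile, so that
  u' = W / sqrt (1 - W^2) and the equation reads (r W)' = alpha r <nu, p> / |p|^2 with
  p = (r, u) and unit normal nu = (-W, sqrt (1 - W^2)). Rescale r = u0 lam(alpha) tau with
  lam(alpha) = 1 / (1000 (1 + |alpha|)) and write u = u0 m(tau), W = tau h(tau). Integrating
  from the axis gives h(tau) = int_0^1 t Phi(tau t) dt and m(tau) = 1 + lam(alpha) int_0^tau Psi,
  equations without a singularity at tau = 0. Since lam(alpha) and alpha lam(alpha) are small,
  their right-hand sides, truncated to be globally Lipschitz, define a contraction on the bounded
  continuous functions of (alpha, tau). Its fixed point is jointly continuous in (alpha, tau), and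
  a priori bounds show that the truncations are inactive for tau in [0, 1]; undoing the rescaling
  gives solutions on [0, u0 lam(alpha)] that depend continuously on (alpha, u0, r).
\<close>

lemma clamp_real:
  fixes a b x :: real
  assumes "a \<le> b"
  shows "clamp a b x = max a (min b x)"
  using assms unfolding clamp_def Basis_real_def by auto

lemma abs_clamp_diff_le:
  fixes a b x y :: real
  shows "\<bar>clamp a b x - clamp a b y\<bar> \<le> \<bar>x - y\<bar>"
  using dist_clamps_le_dist_args[of a b x y] by (simp add: dist_real_def)

lemma continuous_on_clamp [continuous_intros]:
  fixes f :: "'a::topological_space \<Rightarrow> 'b::euclidean_space"
  shows "continuous_on S f \<Longrightarrow> continuous_on S (\<lambda>x. clamp a b (f x))"
  by (rule continuous_on_compose2[OF clamp_continuous_on[where f="\<lambda>x. x"]])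
     (auto intro: continuous_on_id)

lemma sqrt_one_minus_square_ge_half:
  fixes w :: real
  assumes "\<bar>w\<bar> \<le> 1/2"
  shows "1/2 \<le> sqrt (1 - w\<^sup>2)"
proof (rule real_le_rsqrt)
  have "w\<^sup>2 \<le> (1/2)\<^sup>2"
    using assms by (simp add: abs_le_square_iff[symmetric])
  then show "(1/2)\<^sup>2 \<le> 1 - w\<^sup>2" by (simp add: power2_eq_square)
qed

lemma abs_sqrt_one_minus_square_diff_le:
  fixes v w :: real
  assumes "\<bar>v\<bar> \<le> 1/2" "\<bar>w\<bar> \<le> 1/2"
  shows "\<bar>sqrt (1 - v\<^sup>2) - sqrt (1 - w\<^sup>2)\<bar> \<le> \<bar>v - w\<bar>"
proof -
  define x y where "x = sqrt (1 - v\<^sup>2)" and "y = sqrt (1 - w\<^sup>2)"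
  have x: "1/2 \<le> x" and y: "1/2 \<le> y"
    unfolding x_def y_def by (intro sqrt_one_minus_square_ge_half assms)+
  have "x\<^sup>2 = 1 - v\<^sup>2" "y\<^sup>2 = 1 - w\<^sup>2"
    unfolding x_def y_def using assms by (simp_all add: abs_square_le_1)
  then have "(x - y) * (x + y) = - ((v - w) * (v + w))"
    by (simp add: power2_eq_square algebra_simps)
  then have "\<bar>x - y\<bar> * \<bar>x + y\<bar> = \<bar>v - w\<bar> * \<bar>v + w\<bar>"
    by (metis abs_minus_cancel abs_mult)
  then have "\<bar>x - y\<bar> * (x + y) = \<bar>v - w\<bar> * \<bar>v + w\<bar>"
    using x y by simp
  also have "\<dots> \<le> \<bar>v - w\<bar> * (x + y)"
    using assms x y by (intro mult_left_mono) auto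
  finally have "\<bar>x - y\<bar> \<le> \<bar>v - w\<bar>"
    using x y by (simp add: mult_le_cancel_right_pos)
  then show ?thesis by (simp add: x_def y_def)
qed

lemma abs_divide_diff_le:
  fixes n1 n2 d1 d2 \<delta> C :: real
  assumes "0 < \<delta>" "\<delta> \<le> d1" "\<delta> \<le> d2" "\<bar>n2\<bar> \<le> C"
  shows "\<bar>n1 / d1 - n2 / d2\<bar> \<le> \<bar>n1 - n2\<bar> / \<delta> + C * \<bar>d1 - d2\<bar> / \<delta>\<^sup>2"
proof -
  have "n1 / d1 - n2 / d2 = (n1 - n2) / d1 + n2 * (d2 - d1) / (d1 * d2)"
    using assms by (simp add: field_simps)
  then have "\<bar>n1 / d1 - n2 / d2\<bar> \<le> \<bar>(n1 - n2) / d1\<bar> + \<bar>n2 * (d2 - d1) / (d1 * d2)\<bar>"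
    by (simp only: abs_triangle_ineq)
  moreover have "\<bar>(n1 - n2) / d1\<bar> \<le> \<bar>n1 - n2\<bar> / \<delta>"
    using assms by (simp add: frac_le)
  moreover have "\<bar>n2 * (d2 - d1) / (d1 * d2)\<bar> \<le> C * \<bar>d1 - d2\<bar> / \<delta>\<^sup>2"
  proof -
    have "\<delta>\<^sup>2 \<le> d1 * d2"
      using assms mult_mono[of \<delta> d1 \<delta> d2] by (simp add: power2_eq_square)
    moreover have "\<bar>n2 * (d2 - d1)\<bar> \<le> C * \<bar>d1 - d2\<bar>"
      using assms by (simp add: abs_mult abs_minus_commute mult_right_mono)
    ultimately show ?thesis
      using assms by (simp add: abs_mult frac_le)
  qed
  ultimately show ?thesis by linarith
qed

definition slope :: "real \<Rightarrow> real" where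
  "slope w = w / sqrt (1 - w\<^sup>2)"

lemma sqrt_one_plus_slope_square:
  assumes "\<bar>w\<bar> < 1"
  shows "sqrt (1 + (slope w)\<^sup>2) = 1 / sqrt (1 - w\<^sup>2)"
proof -
  have pos: "0 < 1 - w\<^sup>2"
    using assms by (simp add: abs_square_less_1)
  then have "1 + (slope w)\<^sup>2 = (1 / sqrt (1 - w\<^sup>2))\<^sup>2"
    by (simp add: slope_def power_divide field_simps)
  then show ?thesis
    using pos by simp
qed

lemma slope_div_sqrt_one_plus_slope_square:
  assumes "\<bar>w\<bar> < 1"
  shows "slope w / sqrt (1 + (slope w)\<^sup>2) = w"
proof -
  have "0 < sqrt (1 - w\<^sup>2)"
    using assms by (simp add: abs_square_less_1)
  then show ?thesis
    unfolding sqrt_one_plus_slope_square[OF assms] by (simp add: slope_def)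
qed

lemma DERIV_slope:
  assumes "\<bar>w\<bar> < 1"
  shows "(slope has_real_derivative 1 / ((1 - w\<^sup>2) * sqrt (1 - w\<^sup>2))) (at w)"
proof -
  define s where "s = sqrt (1 - w\<^sup>2)"
  have pos: "0 < 1 - w\<^sup>2"
    using assms by (simp add: abs_square_less_1)
  then have s: "0 < s" "s * s = 1 - w\<^sup>2"
    unfolding s_def by (simp_all add: real_sqrt_mult_self)
  have "(slope has_real_derivative (1 * s - w * (inverse s / 2 * - (2 * w))) / (s * s)) (at w)"
    unfolding slope_def[abs_def] s_def using pos
    by (auto intro!: derivative_eq_intros)
  moreover have "(1 * s - w * (inverse s / 2 * - (2 * w))) / (s * s) = (s * s + w * w) / (s * s * s)"
    using s by (simp add: field_simps)
  moreover have "\<dots> = 1 / ((1 - w\<^sup>2) * s)"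
    by (simp add: s(2) power2_eq_square)
  ultimately show ?thesis
    by (simp add: s_def)
qed

lemma abs_slope_le:
  assumes "\<bar>w\<bar> \<le> 1/2"
  shows "\<bar>slope w\<bar> \<le> 1"
proof -
  have half: "1/2 \<le> sqrt (1 - w\<^sup>2)"
    using assms by (rule sqrt_one_minus_square_ge_half)
  then have "0 < sqrt (1 - w\<^sup>2)" by linarith
  then have "\<bar>slope w\<bar> = \<bar>w\<bar> / sqrt (1 - w\<^sup>2)"
    by (simp add: slope_def abs_divide)
  also have "\<dots> \<le> (1/2) / (1/2)"
    using assms half by (intro frac_le) auto
  finally show ?thesis by simp
qed

lemma abs_slope_diff_le:
  assumes "\<bar>v\<bar> \<le> 1/2" "\<bar>w\<bar> \<le> 1/2"
  shows "\<bar>slope v - slope w\<bar> \<le> 4 * \<bar>v - w\<bar>"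
proof -
  have "\<bar>slope v - slope w\<bar>
      \<le> \<bar>v - w\<bar> / (1/2) + 1/2 * \<bar>sqrt (1 - v\<^sup>2) - sqrt (1 - w\<^sup>2)\<bar> / (1/2)\<^sup>2"
    unfolding slope_def using assms
    by (intro abs_divide_diff_le sqrt_one_minus_square_ge_half) auto
  also have "\<dots> \<le> \<bar>v - w\<bar> / (1/2) + 1/2 * \<bar>v - w\<bar> / (1/2)\<^sup>2"
    using abs_sqrt_one_minus_square_diff_le[OF assms] by (simp add: divide_right_mono)
  finally show ?thesis
    by (simp add: power2_eq_square)
qed

lemma continuous_on_slope [continuous_intros]:
  assumes "continuous_on S f" "\<And>x. x \<in> S \<Longrightarrow> \<bar>f x\<bar> < 1"
  shows "continuous_on S (\<lambda>x. slope (f x))"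
proof -
  have "sqrt (1 - (f x)\<^sup>2) \<noteq> 0" if "x \<in> S" for x
    using assms(2)[OF that] by (simp add: abs_square_eq_1)
  then show ?thesis
    unfolding slope_def using assms(1) by (intro continuous_intros) auto
qed

(* <nu, p> / |p|^2 at p = (x, y), for the unit normal nu = (-w, sqrt (1 - w^2)) of a curve
   whose tangent angle has sine w. *)
definition normal_ratio :: "real \<Rightarrow> real \<Rightarrow> real \<Rightarrow> real" where
  "normal_ratio x w y = (y * sqrt (1 - w\<^sup>2) - x * w) / (x\<^sup>2 + y\<^sup>2)"

lemma normal_ratio_numerator_denominator_bounds:
  assumes "0 \<le> x" "x \<le> 1" "\<bar>w\<bar> \<le> 1/2" "1/2 \<le> y" "y \<le> 3/2"
  shows "\<bar>y * sqrt (1 - w\<^sup>2) - x * w\<bar> \<le> 2" and "1/4 \<le> x\<^sup>2 + y\<^sup>2"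
proof -
  have s: "1/2 \<le> sqrt (1 - w\<^sup>2)" "sqrt (1 - w\<^sup>2) \<le> 1"
    using sqrt_one_minus_square_ge_half[OF assms(3)] by auto
  have "0 \<le> y * sqrt (1 - w\<^sup>2)"
    by (intro mult_nonneg_nonneg) (use s assms in linarith)+
  moreover have "y * sqrt (1 - w\<^sup>2) \<le> 3/2 * 1"
    by (intro mult_mono) (use s assms in linarith)+
  moreover have "\<bar>x * w\<bar> \<le> 1 * (1/2)"
    unfolding abs_mult using assms by (intro mult_mono) auto
  ultimately show "\<bar>y * sqrt (1 - w\<^sup>2) - x * w\<bar> \<le> 2" by linarith
  have "(1/2)\<^sup>2 \<le> y\<^sup>2"
    using assms by (intro power_mono) auto
  then show "1/4 \<le> x\<^sup>2 + y\<^sup>2"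
    by (simp add: power2_eq_square add_increasing)
qed

lemma abs_normal_ratio_le:
  assumes "0 \<le> x" "x \<le> 1" "\<bar>w\<bar> \<le> 1/2" "1/2 \<le> y" "y \<le> 3/2"
  shows "\<bar>normal_ratio x w y\<bar> \<le> 8"
proof -
  note bounds = normal_ratio_numerator_denominator_bounds[OF assms]
  have "\<bar>normal_ratio x w y\<bar> \<le> 2 / (1/4)"
    unfolding normal_ratio_def abs_divide using bounds by (intro frac_le) auto
  then show ?thesis by simp
qed

lemma abs_normal_ratio_numerator_diff_le:
  assumes x: "0 \<le> x" "x \<le> 1" and w: "\<bar>w1\<bar> \<le> 1/2" "\<bar>w2\<bar> \<le> 1/2" and y2: "0 \<le> y2" "y2 \<le> 3/2"
  shows "\<bar>y1 * sqrt (1 - w1\<^sup>2) - x * w1 - (y2 * sqrt (1 - w2\<^sup>2) - x * w2)\<bar>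
           \<le> \<bar>y1 - y2\<bar> + 5/2 * \<bar>w1 - w2\<bar>"
proof -
  define s1 s2 where "s1 = sqrt (1 - w1\<^sup>2)" and "s2 = sqrt (1 - w2\<^sup>2)"
  have s: "0 \<le> s1" "s1 \<le> 1" "\<bar>s1 - s2\<bar> \<le> \<bar>w1 - w2\<bar>"
    unfolding s1_def s2_def
    using w(1) sqrt_one_minus_square_ge_half[OF w(1)] abs_sqrt_one_minus_square_diff_le[OF w]
    by (auto simp: abs_square_le_1)
  have tri: "\<bar>a + b - c\<bar> \<le> \<bar>a\<bar> + \<bar>b\<bar> + \<bar>c\<bar>" for a b c :: real
    by linarith
  have "y1 * s1 - x * w1 - (y2 * s2 - x * w2) = (y1 - y2) * s1 + y2 * (s1 - s2) - x * (w1 - w2)"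
    by (simp add: algebra_simps)
  then have "\<bar>y1 * s1 - x * w1 - (y2 * s2 - x * w2)\<bar>
      \<le> \<bar>(y1 - y2) * s1\<bar> + \<bar>y2 * (s1 - s2)\<bar> + \<bar>x * (w1 - w2)\<bar>"
    by (simp only: tri)
  also have "\<dots> \<le> \<bar>y1 - y2\<bar> + 3/2 * \<bar>w1 - w2\<bar> + \<bar>w1 - w2\<bar>"
  proof (intro add_mono)
    show "\<bar>(y1 - y2) * s1\<bar> \<le> \<bar>y1 - y2\<bar>"
      unfolding abs_mult using s by (simp add: mult_left_le)
    show "\<bar>y2 * (s1 - s2)\<bar> \<le> 3/2 * \<bar>w1 - w2\<bar>"
      unfolding abs_mult using s y2 by (intro mult_mono) auto
    show "\<bar>x * (w1 - w2)\<bar> \<le> \<bar>w1 - w2\<bar>"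
      unfolding abs_mult using x by (simp add: mult_left_le_one_le)
  qed
  also have "\<dots> = \<bar>y1 - y2\<bar> + 5/2 * \<bar>w1 - w2\<bar>"
    by simp
  finally show ?thesis
    unfolding s1_def s2_def .
qed

lemma abs_normal_ratio_diff_le:
  assumes x: "0 \<le> x" "x \<le> 1"
    and 1: "\<bar>w1\<bar> \<le> 1/2" "1/2 \<le> y1" "y1 \<le> 3/2"
    and 2: "\<bar>w2\<bar> \<le> 1/2" "1/2 \<le> y2" "y2 \<le> 3/2"
  shows "\<bar>normal_ratio x w1 y1 - normal_ratio x w2 y2\<bar> \<le> 100 * (\<bar>w1 - w2\<bar> + \<bar>y1 - y2\<bar>)"
proof -
  have "\<bar>(x\<^sup>2 + y1\<^sup>2) - (x\<^sup>2 + y2\<^sup>2)\<bar> = \<bar>y1 - y2\<bar> * \<bar>y1 + y2\<bar>"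
    by (simp add: abs_mult[symmetric] power2_eq_square algebra_simps)
  also have "\<dots> \<le> \<bar>y1 - y2\<bar> * 3"
    using 1 2 by (intro mult_left_mono) auto
  finally have denominator: "\<bar>(x\<^sup>2 + y1\<^sup>2) - (x\<^sup>2 + y2\<^sup>2)\<bar> \<le> 3 * \<bar>y1 - y2\<bar>" by simp
  have numerator: "\<bar>y1 * sqrt (1 - w1\<^sup>2) - x * w1 - (y2 * sqrt (1 - w2\<^sup>2) - x * w2)\<bar>
      \<le> \<bar>y1 - y2\<bar> + 5/2 * \<bar>w1 - w2\<bar>"
    using 2 by (intro abs_normal_ratio_numerator_diff_le x 1(1) 2(1)) auto
  note bounds1 = normal_ratio_numerator_denominator_bounds[OF x 1]
  note bounds2 = normal_ratio_numerator_denominator_bounds[OF x 2]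
  have "\<bar>normal_ratio x w1 y1 - normal_ratio x w2 y2\<bar>
      \<le> \<bar>y1 * sqrt (1 - w1\<^sup>2) - x * w1 - (y2 * sqrt (1 - w2\<^sup>2) - x * w2)\<bar> / (1/4)
         + 2 * \<bar>(x\<^sup>2 + y1\<^sup>2) - (x\<^sup>2 + y2\<^sup>2)\<bar> / (1/4)\<^sup>2"
    unfolding normal_ratio_def using bounds1 bounds2
    by (intro abs_divide_diff_le) auto
  also have "\<dots> \<le> (\<bar>y1 - y2\<bar> + 5/2 * \<bar>w1 - w2\<bar>) / (1/4) + 2 * (3 * \<bar>y1 - y2\<bar>) / (1/4)\<^sup>2"
    using numerator denominator by (intro add_mono divide_right_mono mult_left_mono) auto
  also have "\<dots> \<le> 100 * (\<bar>w1 - w2\<bar> + \<bar>y1 - y2\<bar>)"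
    by (simp add: power2_eq_square)
  finally show ?thesis .
qed

lemma normal_ratio_rescaled:
  assumes "\<bar>w\<bar> < 1" "u0 \<noteq> 0" "y \<noteq> 0"
  shows "\<alpha> * (u0 * L * \<tau> * (u0 * y - u0 * L * \<tau> * slope w))
           / (((u0 * L * \<tau>)\<^sup>2 + (u0 * y)\<^sup>2) * sqrt (1 + (slope w)\<^sup>2))
         = \<tau> * (\<alpha> * L * normal_ratio (L * \<tau>) w y)"
proof -
  define c where "c = sqrt (1 - w\<^sup>2)"
  have sqrt_eq: "sqrt (1 + (slope w)\<^sup>2) = 1 / c"
    unfolding c_def by (rule sqrt_one_plus_slope_square[OF assms(1)])
  have slope_eq: "slope w = w / c"
    unfolding c_def slope_def ..
  have c: "0 < c"
    unfolding c_def using assms by (simp add: abs_square_less_1)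
  define X where "X = (L * \<tau>)\<^sup>2 + y\<^sup>2"
  have X: "0 < X"
    unfolding X_def using assms by (simp add: add_nonneg_pos)
  have num: "u0 * L * \<tau> * (u0 * y - u0 * L * \<tau> * (w / c)) = u0\<^sup>2 * (L * \<tau> * (y * c - L * \<tau> * w)) / c"
    using c by (simp add: field_simps power2_eq_square)
  have den: "(u0 * L * \<tau>)\<^sup>2 + (u0 * y)\<^sup>2 = u0\<^sup>2 * X"
    unfolding X_def by (simp add: power2_eq_square algebra_simps)
  have "\<alpha> * (u0 * L * \<tau> * (u0 * y - u0 * L * \<tau> * slope w))
          / (((u0 * L * \<tau>)\<^sup>2 + (u0 * y)\<^sup>2) * sqrt (1 + (slope w)\<^sup>2))
      = \<alpha> * (u0\<^sup>2 * (L * \<tau> * (y * c - L * \<tau> * w)) / c) / (u0\<^sup>2 * X * (1 / c))"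
    unfolding sqrt_eq unfolding slope_eq num den ..
  also have "\<dots> = \<alpha> * (L * \<tau> * (y * c - L * \<tau> * w)) / X"
    using c X assms by (simp add: field_simps)
  also have "\<dots> = \<tau> * (\<alpha> * L * normal_ratio (L * \<tau>) w y)"
    unfolding normal_ratio_def c_def X_def by (simp add: algebra_simps)
  finally show ?thesis .
qed

section \<open>The truncated integral equations\<close>

(* Any small constant works; 1/1000 makes the integral map below a contraction with factor 1/2. *)
definition lam :: "real \<Rightarrow> real" where
  "lam \<alpha> = 1 / (1000 * (1 + \<bar>\<alpha>\<bar>))"

lemma lam_pos: "0 < lam \<alpha>"
  unfolding lam_def by (simp add: add_pos_nonneg)

lemma lam_le: "lam \<alpha> \<le> 1/1000"
  unfolding lam_def by (simp add: field_simps)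

lemma abs_mult_lam_le: "\<bar>\<alpha> * lam \<alpha>\<bar> \<le> 1/1000"
  unfolding lam_def by (simp add: abs_mult field_simps add_pos_nonneg)

lemma lam_antimono: "\<bar>\<alpha>\<bar> \<le> \<bar>\<beta>\<bar> \<Longrightarrow> lam \<beta> \<le> lam \<alpha>"
  unfolding lam_def by (simp add: frac_le add_pos_nonneg)

lemma continuous_on_lam [continuous_intros]:
  "continuous_on S f \<Longrightarrow> continuous_on S (\<lambda>x. lam (f x))"
  unfolding lam_def by (intro continuous_intros) (auto simp: abs_if)

lemma lam_mult_bounds:
  assumes "0 \<le> \<tau>" "\<tau> \<le> 1"
  shows "0 \<le> lam \<alpha> * \<tau>" "lam \<alpha> * \<tau> \<le> 1/1000"
proof -
  show "0 \<le> lam \<alpha> * \<tau>"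
    using assms lam_pos[of \<alpha>] by simp
  have "lam \<alpha> * \<tau> \<le> 1/1000 * 1"
    using assms lam_pos[of \<alpha>] lam_le[of \<alpha>] by (intro mult_mono) auto
  then show "lam \<alpha> * \<tau> \<le> 1/1000" by simp
qed

lemma abs_clamp_half_le: "\<bar>clamp (-1/2) (1/2) x\<bar> \<le> (1/2 :: real)"
  by (simp add: clamp_real)

lemma clamp_half_bounds: "1/2 \<le> clamp (1/2) (3/2) y" "clamp (1/2) (3/2) y \<le> (3/2 :: real)"
  by (simp_all add: clamp_real)

lemma abs_clamp_scaled_diff_le:
  fixes \<tau> x y :: real
  assumes "0 \<le> \<tau>" "\<tau> \<le> 1"
  shows "\<bar>clamp a b (\<tau> * x) - clamp a b (\<tau> * y)\<bar> \<le> \<bar>x - y\<bar>"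
proof -
  have "\<bar>\<tau> * x - \<tau> * y\<bar> = \<tau> * \<bar>x - y\<bar>"
    using assms by (simp add: abs_mult right_diff_distrib[symmetric])
  also have "\<dots> \<le> \<bar>x - y\<bar>"
    using assms by (simp add: mult_left_le_one_le)
  finally show ?thesis
    using abs_clamp_diff_le order_trans by blast
qed

(* Right-hand sides of (tau^2 h)' = tau Phi and m' = lam Psi; the clamps are inactive on actual
   solutions and only serve to make the map globally bounded and Lipschitz. *)
definition Phi :: "real \<Rightarrow> real \<Rightarrow> real \<times> real \<Rightarrow> real" where
  "Phi \<alpha> \<tau> p =
     \<alpha> * lam \<alpha> * normal_ratio (lam \<alpha> * \<tau>) (clamp (-1/2) (1/2) (\<tau> * fst p)) (clamp (1/2) (3/2) (snd p))"

definition Psi :: "real \<Rightarrow> real \<times> real \<Rightarrow> real" where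
  "Psi \<tau> p = slope (clamp (-1/2) (1/2) (\<tau> * fst p))"

lemma abs_Phi_le:
  assumes "0 \<le> \<tau>" "\<tau> \<le> 1"
  shows "\<bar>Phi \<alpha> \<tau> p\<bar> \<le> 1/125"
proof -
  have "\<bar>Phi \<alpha> \<tau> p\<bar>
      = \<bar>\<alpha> * lam \<alpha>\<bar> * \<bar>normal_ratio (lam \<alpha> * \<tau>) (clamp (-1/2) (1/2) (\<tau> * fst p)) (clamp (1/2) (3/2) (snd p))\<bar>"
    by (simp add: Phi_def abs_mult)
  also have "\<dots> \<le> 1/1000 * 8"
    using lam_mult_bounds[OF assms, of \<alpha>] abs_clamp_half_le clamp_half_bounds
    by (intro mult_mono abs_mult_lam_le abs_normal_ratio_le) auto
  finally show ?thesis by simp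
qed

lemma abs_Phi_diff_le:
  assumes "0 \<le> \<tau>" "\<tau> \<le> 1"
  shows "\<bar>Phi \<alpha> \<tau> p - Phi \<alpha> \<tau> q\<bar> \<le> dist p q / 5"
proof -
  let ?w = "\<lambda>p. clamp (-1/2) (1/2) (\<tau> * fst p)" and ?y = "\<lambda>p. clamp (1/2) (3/2) (snd p)"
  have "\<bar>?w p - ?w q\<bar> \<le> dist p q"
    by (rule order_trans[OF abs_clamp_scaled_diff_le[OF assms] dist_fst_le[of p q, unfolded dist_real_def]])
  moreover have "\<bar>?y p - ?y q\<bar> \<le> dist p q"
    by (rule order_trans[OF abs_clamp_diff_le dist_snd_le[of p q, unfolded dist_real_def]])
  ultimately have "\<bar>normal_ratio (lam \<alpha> * \<tau>) (?w p) (?y p) - normal_ratio (lam \<alpha> * \<tau>) (?w q) (?y q)\<bar>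
      \<le> 100 * (dist p q + dist p q)"
    using lam_mult_bounds[OF assms, of \<alpha>] abs_clamp_half_le clamp_half_bounds
    by (intro order_trans[OF abs_normal_ratio_diff_le]) auto
  then have "\<bar>\<alpha> * lam \<alpha>\<bar> * \<bar>normal_ratio (lam \<alpha> * \<tau>) (?w p) (?y p) - normal_ratio (lam \<alpha> * \<tau>) (?w q) (?y q)\<bar>
      \<le> 1/1000 * (100 * (dist p q + dist p q))"
    by (intro mult_mono abs_mult_lam_le) auto
  then show ?thesis
    by (simp add: Phi_def abs_mult[symmetric] right_diff_distrib)
qed

lemma abs_Psi_le: "\<bar>Psi \<tau> p\<bar> \<le> 1"
  unfolding Psi_def by (intro abs_slope_le abs_clamp_half_le)

lemma abs_Psi_diff_le:
  assumes "0 \<le> \<tau>" "\<tau> \<le> 1"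
  shows "\<bar>Psi \<tau> p - Psi \<tau> q\<bar> \<le> 4 * dist p q"
proof -
  have "\<bar>Psi \<tau> p - Psi \<tau> q\<bar> \<le> 4 * \<bar>clamp (-1/2) (1/2) (\<tau> * fst p) - clamp (-1/2) (1/2) (\<tau> * fst q)\<bar>"
    unfolding Psi_def by (intro abs_slope_diff_le abs_clamp_half_le)
  also have "\<dots> \<le> 4 * dist p q"
    by (intro mult_left_mono order_trans[OF abs_clamp_scaled_diff_le[OF assms]
          dist_fst_le[of p q, unfolded dist_real_def]]) simp
  finally show ?thesis .
qed

lemma continuous_on_Phi [continuous_intros]:
  assumes "continuous_on S a" "continuous_on S t" "continuous_on S p"
  shows "continuous_on S (\<lambda>x. Phi (a x) (t x) (p x))"
proof -
  have "(lam (a x) * t x)\<^sup>2 + (clamp (1/2) (3/2) (snd (p x)))\<^sup>2 \<noteq> 0" for x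
    using clamp_half_bounds(1)[of "snd (p x)"] by (simp add: add_nonneg_eq_0_iff)
  then show ?thesis
    unfolding Phi_def normal_ratio_def using assms by (intro continuous_intros) auto
qed

lemma continuous_on_Psi [continuous_intros]:
  assumes "continuous_on S t" "continuous_on S p"
  shows "continuous_on S (\<lambda>x. Psi (t x) (p x))"
proof -
  have "\<bar>clamp (-1/2) (1/2) y\<bar> < (1 :: real)" for y
    using abs_clamp_half_le[of y] by linarith
  then show ?thesis
    unfolding Psi_def using assms by (intro continuous_intros) auto
qed

lemma abs_integral_01_le:
  fixes f :: "real \<Rightarrow> real"
  assumes "continuous_on {0..1} f" "\<And>t. t \<in> {0..1} \<Longrightarrow> \<bar>f t\<bar> \<le> B"
  shows "\<bar>integral {0..1} f\<bar> \<le> B"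
  using integral_bound[of 0 1 f B] assms by simp

lemma abs_integral_01_diff_le:
  fixes f g :: "real \<Rightarrow> real"
  assumes "continuous_on {0..1} f" "continuous_on {0..1} g"
    and "\<And>t. t \<in> {0..1} \<Longrightarrow> \<bar>f t - g t\<bar> \<le> B"
  shows "\<bar>integral {0..1} f - integral {0..1} g\<bar> \<le> B"
proof -
  have "integral {0..1} f - integral {0..1} g = integral {0..1} (\<lambda>t. f t - g t)"
    using assms by (intro integral_diff[symmetric] integrable_continuous_real)
  also have "\<bar>\<dots>\<bar> \<le> B"
    using assms by (intro abs_integral_01_le continuous_intros)
  finally show ?thesis .
qed

lemma integral_rescale_01:
  fixes g :: "real \<Rightarrow> real"
  assumes g: "continuous_on {0..1} g" and \<tau>: "\<tau> \<in> {0..1}"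
  shows "integral {0..1} (\<lambda>t. \<tau> * g (\<tau> * t)) = integral {0..\<tau>} g"
proof -
  define G where "G x = integral {0..x} g" for x
  have "((\<lambda>t. G (\<tau> * t)) has_vector_derivative \<tau> * g (\<tau> * t)) (at t within {0..1})"
    if t: "t \<in> {0..1}" for t
  proof -
    have "((\<lambda>t. \<tau> * t) has_vector_derivative \<tau>) (at t within {0..1})"
      by (auto intro!: derivative_eq_intros simp: has_real_derivative_iff_has_vector_derivative[symmetric])
    moreover have "(G has_vector_derivative g (\<tau> * t)) (at (\<tau> * t) within (\<lambda>t. \<tau> * t) ` {0..1})"
      unfolding G_def using \<tau> t
      by (intro has_vector_derivative_within_subset[OF integral_has_vector_derivative[OF g]])
         (auto intro: mult_le_one)
    ultimately show ?thesis
      using vector_diff_chain_within by (fastforce simp: o_def)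
  qed
  then have "((\<lambda>t. \<tau> * g (\<tau> * t)) has_integral G (\<tau> * 1) - G (\<tau> * 0)) {0..1}"
    by (intro fundamental_theorem_of_calculus) auto
  then have "((\<lambda>t. \<tau> * g (\<tau> * t)) has_integral integral {0..\<tau>} g) {0..1}"
    by (simp add: G_def)
  then show ?thesis
    by (rule integral_unique)
qed

lemma integral_01_mult_left_id: "integral {0..1} (\<lambda>t::real. t * c) = c / 2"
proof -
  have "((\<lambda>t::real. t * c) has_integral (1\<^sup>2 / 2 * c - 0\<^sup>2 / 2 * c)) {0..1}"
    by (intro fundamental_theorem_of_calculus)
       (auto intro!: derivative_eq_intros simp: has_real_derivative_iff_has_vector_derivative[symmetric])
  then show ?thesis
    by (simp add: integral_unique)
qed

lemma DERIV_rescale_within: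
  assumes "(f has_real_derivative D) (at (r / K) within {0..1})" "0 < K" "r \<in> {0..K}"
  shows "((\<lambda>r. f (r / K)) has_real_derivative D / K) (at r within {0..K})"
proof -
  have "(\<lambda>r. r / K) ` {0..K} \<subseteq> {0..1}"
    using assms by auto
  then have "(f has_real_derivative D) (at (r / K) within (\<lambda>r. r / K) ` {0..K})"
    by (rule has_field_derivative_subset[OF assms(1)])
  moreover have "((\<lambda>r. r / K) has_real_derivative 1 / K) (at r within {0..K})"
    using assms by (auto intro!: derivative_eq_intros)
  ultimately show ?thesis
    using DERIV_image_chain by (fastforce simp: o_def)
qed

definition profile_op :: "(real \<times> real \<Rightarrow> real \<times> real) \<Rightarrow> real \<times> real \<Rightarrow> real \<times> real" where
  "profile_op P = (\<lambda>(\<alpha>, \<tau>). let \<sigma> = clamp 0 1 \<tau> in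
     (integral {0..1} (\<lambda>t. t * Phi \<alpha> (\<sigma> * t) (P (\<alpha>, \<sigma> * t))),
      1 + integral {0..1} (\<lambda>t. \<sigma> * lam \<alpha> * Psi (\<sigma> * t) (P (\<alpha>, \<sigma> * t)))))"

lemma continuous_on_profile_op:
  assumes P: "continuous_on UNIV P"
  shows "continuous_on UNIV (profile_op P)"
proof -
  have "continuous_on UNIV (\<lambda>x. integral (cbox 0 1)
      (\<lambda>t. t * Phi (fst x) (clamp 0 1 (snd x) * t) (P (fst x, clamp 0 1 (snd x) * t))))"
    by (intro integral_continuous_on_param)
       (auto simp: case_prod_beta intro!: continuous_intros continuous_on_compose2[OF P _ subset_UNIV])
  moreover have "continuous_on UNIV (\<lambda>x. integral (cbox 0 1)
      (\<lambda>t. clamp 0 1 (snd x) * lam (fst x) * Psi (clamp 0 1 (snd x) * t) (P (fst x, clamp 0 1 (snd x) * t))))"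
    by (intro integral_continuous_on_param)
       (auto simp: case_prod_beta intro!: continuous_intros continuous_on_compose2[OF P _ subset_UNIV])
  ultimately show ?thesis
    unfolding profile_op_def case_prod_beta Let_def cbox_interval by (intro continuous_intros)
qed

lemma profile_op_bounds:
  assumes P: "continuous_on UNIV P"
  shows "\<bar>fst (profile_op P x)\<bar> \<le> 1/125" "\<bar>snd (profile_op P x) - 1\<bar> \<le> 1/1000"
proof -
  obtain \<alpha> \<tau> where x: "x = (\<alpha>, \<tau>)" by fastforce
  define \<sigma> where "\<sigma> = clamp 0 (1::real) \<tau>"
  have \<sigma>: "0 \<le> \<sigma>" "\<sigma> \<le> 1"
    unfolding \<sigma>_def by (simp_all add: clamp_real)
  have cont: "continuous_on {0..1} (\<lambda>t. P (\<alpha>, \<sigma> * t))"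
    by (intro continuous_intros continuous_on_compose2[OF P _ subset_UNIV])
  show "\<bar>fst (profile_op P x)\<bar> \<le> 1/125"
    unfolding x profile_op_def \<sigma>_def[symmetric] Let_def prod.case fst_conv
  proof (intro abs_integral_01_le)
    show "continuous_on {0..1} (\<lambda>t. t * Phi \<alpha> (\<sigma> * t) (P (\<alpha>, \<sigma> * t)))"
      using cont by (intro continuous_intros)
    fix t :: real assume "t \<in> {0..1}"
      then have "\<bar>t\<bar> * \<bar>Phi \<alpha> (\<sigma> * t) (P (\<alpha>, \<sigma> * t))\<bar> \<le> 1 * (1/125)"
      using \<sigma> by (intro mult_mono abs_Phi_le) (auto intro: mult_le_one)
    then show "\<bar>t * Phi \<alpha> (\<sigma> * t) (P (\<alpha>, \<sigma> * t))\<bar> \<le> 1/125"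
      by (simp add: abs_mult)
  qed
  show "\<bar>snd (profile_op P x) - 1\<bar> \<le> 1/1000"
    unfolding x profile_op_def \<sigma>_def[symmetric] Let_def prod.case snd_conv add_diff_cancel_left'
  proof (intro abs_integral_01_le)
    show "continuous_on {0..1} (\<lambda>t. \<sigma> * lam \<alpha> * Psi (\<sigma> * t) (P (\<alpha>, \<sigma> * t)))"
      using cont by (intro continuous_intros)
    fix t :: real
    have "\<bar>\<sigma> * lam \<alpha>\<bar> * \<bar>Psi (\<sigma> * t) (P (\<alpha>, \<sigma> * t))\<bar> \<le> 1/1000 * 1"
      using lam_mult_bounds[OF \<sigma>, of \<alpha>] by (intro mult_mono abs_Psi_le) (auto simp: mult.commute)
    then show "\<bar>\<sigma> * lam \<alpha> * Psi (\<sigma> * t) (P (\<alpha>, \<sigma> * t))\<bar> \<le> 1/1000"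
      by (simp add: abs_mult)
  qed
qed

lemma abs_integral_Phi_diff_le:
  assumes P: "continuous_on UNIV P" and Q: "continuous_on UNIV Q"
    and D: "\<And>y. dist (P y) (Q y) \<le> D" and \<sigma>: "0 \<le> \<sigma>" "\<sigma> \<le> 1"
  shows "\<bar>integral {0..1} (\<lambda>t. t * Phi \<alpha> (\<sigma> * t) (P (\<alpha>, \<sigma> * t)))
           - integral {0..1} (\<lambda>t. t * Phi \<alpha> (\<sigma> * t) (Q (\<alpha>, \<sigma> * t)))\<bar> \<le> D / 5"
proof (rule abs_integral_01_diff_le)
  fix t :: real assume "t \<in> {0..1}"
  then have "\<bar>t\<bar> * \<bar>Phi \<alpha> (\<sigma> * t) (P (\<alpha>, \<sigma> * t)) - Phi \<alpha> (\<sigma> * t) (Q (\<alpha>, \<sigma> * t))\<bar> \<le> 1 * (D / 5)"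
    using \<sigma> D by (intro mult_mono order_trans[OF abs_Phi_diff_le]) (auto intro: mult_le_one)
  then show "\<bar>t * Phi \<alpha> (\<sigma> * t) (P (\<alpha>, \<sigma> * t)) - t * Phi \<alpha> (\<sigma> * t) (Q (\<alpha>, \<sigma> * t))\<bar> \<le> D / 5"
    by (simp add: abs_mult[symmetric] right_diff_distrib)
qed (intro continuous_intros continuous_on_compose2[OF P _ subset_UNIV]
       continuous_on_compose2[OF Q _ subset_UNIV])+

lemma abs_integral_Psi_diff_le:
  assumes P: "continuous_on UNIV P" and Q: "continuous_on UNIV Q"
    and D: "\<And>y. dist (P y) (Q y) \<le> D" and \<sigma>: "0 \<le> \<sigma>" "\<sigma> \<le> 1"
  shows "\<bar>integral {0..1} (\<lambda>t. \<sigma> * lam \<alpha> * Psi (\<sigma> * t) (P (\<alpha>, \<sigma> * t)))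
           - integral {0..1} (\<lambda>t. \<sigma> * lam \<alpha> * Psi (\<sigma> * t) (Q (\<alpha>, \<sigma> * t)))\<bar> \<le> D / 250"
proof (rule abs_integral_01_diff_le)
  fix t :: real assume "t \<in> {0..1}"
  moreover have "\<bar>\<sigma> * lam \<alpha>\<bar> \<le> 1/1000"
    using lam_mult_bounds[OF \<sigma>, of \<alpha>] by (simp add: mult.commute)
  ultimately have "\<bar>\<sigma> * lam \<alpha>\<bar> * \<bar>Psi (\<sigma> * t) (P (\<alpha>, \<sigma> * t)) - Psi (\<sigma> * t) (Q (\<alpha>, \<sigma> * t))\<bar>
      \<le> 1/1000 * (4 * D)"
    using \<sigma> D by (intro mult_mono order_trans[OF abs_Psi_diff_le]) (auto intro: mult_le_one)
  then show "\<bar>\<sigma> * lam \<alpha> * Psi (\<sigma> * t) (P (\<alpha>, \<sigma> * t)) - \<sigma> * lam \<alpha> * Psi (\<sigma> * t) (Q (\<alpha>, \<sigma> * t))\<bar>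
      \<le> D / 250"
    by (simp add: abs_mult[symmetric] right_diff_distrib)
qed (intro continuous_intros continuous_on_compose2[OF P _ subset_UNIV]
       continuous_on_compose2[OF Q _ subset_UNIV])+

lemma dist_profile_op_le:
  assumes P: "continuous_on UNIV P" and Q: "continuous_on UNIV Q"
    and D: "\<And>y. dist (P y) (Q y) \<le> D"
  shows "dist (profile_op P x) (profile_op Q x) \<le> D / 2"
proof -
  obtain \<alpha> \<tau> where x: "x = (\<alpha>, \<tau>)" by fastforce
  define \<sigma> where "\<sigma> = clamp 0 (1::real) \<tau>"
  have \<sigma>: "0 \<le> \<sigma>" "\<sigma> \<le> 1"
    unfolding \<sigma>_def by (simp_all add: clamp_real)
  have "0 \<le> D"
    using D[of x] zero_le_dist[of "P x" "Q x"] by linarith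
  with abs_integral_Phi_diff_le[OF P Q D \<sigma>, of \<alpha>] abs_integral_Psi_diff_le[OF P Q D \<sigma>, of \<alpha>]
  show ?thesis
    unfolding x profile_op_def \<sigma>_def[symmetric] Let_def prod.case dist_Pair_Pair dist_real_def
    by (intro order_trans[OF sqrt_sum_squares_le_sum_abs]) simp
qed

lemma profile_op_has_fixed_point: "\<exists>P. continuous_on UNIV P \<and> (\<forall>x. P x = profile_op P x)"
proof -
  have bcontfun: "profile_op (apply_bcontfun p) \<in> bcontfun" for p
  proof (intro bcontfun_normI continuous_on_profile_op continuous_on_apply_bcontfun)
    fix x
    have "norm (profile_op (apply_bcontfun p) x)
        \<le> \<bar>fst (profile_op (apply_bcontfun p) x)\<bar> + \<bar>snd (profile_op (apply_bcontfun p) x)\<bar>"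
      by (metis norm_Pair prod.collapse real_norm_def sqrt_sum_squares_le_sum_abs power2_abs)
    then show "norm (profile_op (apply_bcontfun p) x) \<le> 1/125 + (1 + 1/1000)"
      using profile_op_bounds[OF continuous_on_apply_bcontfun, of p x] by linarith
  qed
  define T where "T p = Bcontfun (profile_op (apply_bcontfun p))" for p
  have T: "apply_bcontfun (T p) = profile_op (apply_bcontfun p)" for p
    unfolding T_def using bcontfun by (rule Bcontfun_inverse)
  have "\<exists>!p. T p = p"
  proof (rule banach_fix_type[of "1/2"])
    show "\<forall>p q. dist (T p) (T q) \<le> 1/2 * dist p q"
    proof (intro allI dist_bound)
      fix p q x
      have "dist (profile_op (apply_bcontfun p) x) (profile_op (apply_bcontfun q) x) \<le> dist p q / 2"
        by (intro dist_profile_op_le continuous_on_apply_bcontfun dist_bounded)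
      then show "dist (apply_bcontfun (T p) x) (apply_bcontfun (T q) x) \<le> 1/2 * dist p q"
        by (simp add: T)
    qed
  qed auto
  then obtain p where "T p = p" by blast
  then show ?thesis
    using T[of p] by (intro exI[of _ "apply_bcontfun p"]) auto
qed

section \<open>The fixed point and the profile\<close>

locale profile_fixed_point =
  fixes P :: "real \<times> real \<Rightarrow> real \<times> real"
  assumes continuous_P: "continuous_on UNIV P"
    and P_fixed: "\<And>x. P x = profile_op P x"
begin

(* P (alpha, tau) = (h, m): for tau = r / (u0 lam alpha) the profile is u = u0 m and the sine of
   its tangent angle is w = tau h. *)
definition h :: "real \<Rightarrow> real \<Rightarrow> real" where
  "h \<alpha> \<tau> = fst (P (\<alpha>, \<tau>))"

definition m :: "real \<Rightarrow> real \<Rightarrow> real" where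
  "m \<alpha> \<tau> = snd (P (\<alpha>, \<tau>))"

definition w :: "real \<Rightarrow> real \<Rightarrow> real" where
  "w \<alpha> \<tau> = clamp (-1/2) (1/2) (\<tau> * h \<alpha> \<tau>)"

definition phi :: "real \<Rightarrow> real \<Rightarrow> real" where
  "phi \<alpha> \<tau> = Phi \<alpha> \<tau> (P (\<alpha>, \<tau>))"

lemma continuous_on_P_Pair:
  "continuous_on S f \<Longrightarrow> continuous_on S g \<Longrightarrow> continuous_on S (\<lambda>x. P (f x, g x))"
  by (intro continuous_on_compose2[OF continuous_P _ subset_UNIV] continuous_intros)

lemma continuous_on_h [continuous_intros]:
  "continuous_on S f \<Longrightarrow> continuous_on S g \<Longrightarrow> continuous_on S (\<lambda>x. h (f x) (g x))"
  unfolding h_def by (intro continuous_intros continuous_on_P_Pair)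

lemma continuous_on_m [continuous_intros]:
  "continuous_on S f \<Longrightarrow> continuous_on S g \<Longrightarrow> continuous_on S (\<lambda>x. m (f x) (g x))"
  unfolding m_def by (intro continuous_intros continuous_on_P_Pair)

lemma continuous_on_w [continuous_intros]:
  "continuous_on S f \<Longrightarrow> continuous_on S g \<Longrightarrow> continuous_on S (\<lambda>x. w (f x) (g x))"
  unfolding w_def by (intro continuous_intros)

lemma continuous_on_phi [continuous_intros]:
  "continuous_on S f \<Longrightarrow> continuous_on S g \<Longrightarrow> continuous_on S (\<lambda>x. phi (f x) (g x))"
  unfolding phi_def by (intro continuous_intros continuous_on_P_Pair)

lemma abs_h_le: "\<bar>h \<alpha> \<tau>\<bar> \<le> 1/125"
  unfolding h_def by (subst P_fixed) (rule profile_op_bounds(1)[OF continuous_P])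

lemma abs_m_diff_le: "\<bar>m \<alpha> \<tau> - 1\<bar> \<le> 1/1000"
  unfolding m_def by (subst P_fixed) (rule profile_op_bounds(2)[OF continuous_P])

lemma abs_w_less_one: "\<bar>w \<alpha> \<tau>\<bar> < 1"
  using abs_clamp_half_le[of "\<tau> * h \<alpha> \<tau>"] unfolding w_def by linarith

lemma w_eq:
  assumes "\<tau> \<in> {0..1}"
  shows "w \<alpha> \<tau> = \<tau> * h \<alpha> \<tau>"
proof -
  have "\<bar>\<tau> * h \<alpha> \<tau>\<bar> \<le> 1 * (1/125)"
    unfolding abs_mult using assms abs_h_le by (intro mult_mono) auto
  then show ?thesis
    unfolding w_def by (auto simp: clamp_real max_def min_def)
qed

lemma phi_eq: "phi \<alpha> \<tau> = \<alpha> * lam \<alpha> * normal_ratio (lam \<alpha> * \<tau>) (w \<alpha> \<tau>) (m \<alpha> \<tau>)"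
proof -
  have "1/2 \<le> m \<alpha> \<tau> \<and> m \<alpha> \<tau> \<le> 3/2"
    using abs_m_diff_le[of \<alpha> \<tau>, unfolded abs_diff_le_iff] by simp
  then have "clamp (1/2) (3/2) (m \<alpha> \<tau>) = m \<alpha> \<tau>"
    by (simp add: clamp_real)
  then show ?thesis
    unfolding phi_def Phi_def w_def h_def m_def by simp
qed

lemma P_eq_integrals:
  assumes "\<tau> \<in> {0..1}"
  shows "P (\<alpha>, \<tau>) = (integral {0..1} (\<lambda>t. t * phi \<alpha> (\<tau> * t)),
                       1 + integral {0..1} (\<lambda>t. \<tau> * lam \<alpha> * slope (w \<alpha> (\<tau> * t))))"
proof -
  have "clamp 0 1 \<tau> = \<tau>"
    using assms by (simp add: clamp_real)
  then show ?thesis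
    by (subst P_fixed) (simp add: profile_op_def phi_def Psi_def w_def h_def)
qed

lemma mult_w_eq_integral:
  assumes "\<tau> \<in> {0..1}"
  shows "\<tau> * w \<alpha> \<tau> = integral {0..\<tau>} (\<lambda>\<sigma>. \<sigma> * phi \<alpha> \<sigma>)"
proof -
  have "\<tau> * w \<alpha> \<tau> = \<tau> * (\<tau> * integral {0..1} (\<lambda>t. t * phi \<alpha> (\<tau> * t)))"
    using P_eq_integrals[OF assms, of \<alpha>] w_eq[OF assms] by (simp add: h_def)
  also have "\<dots> = integral {0..1} (\<lambda>t. \<tau> * ((\<tau> * t) * phi \<alpha> (\<tau> * t)))"
    by (simp add: mult.assoc)
  also have "\<dots> = integral {0..\<tau>} (\<lambda>\<sigma>. \<sigma> * phi \<alpha> \<sigma>)"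
    using assms by (intro integral_rescale_01[where g = "\<lambda>\<sigma>. \<sigma> * phi \<alpha> \<sigma>"] continuous_intros)
  finally show ?thesis .
qed

lemma m_eq_integral:
  assumes "\<tau> \<in> {0..1}"
  shows "m \<alpha> \<tau> = 1 + lam \<alpha> * integral {0..\<tau>} (\<lambda>\<sigma>. slope (w \<alpha> \<sigma>))"
proof -
  have "m \<alpha> \<tau> = 1 + lam \<alpha> * integral {0..1} (\<lambda>t. \<tau> * slope (w \<alpha> (\<tau> * t)))"
    using P_eq_integrals[OF assms, of \<alpha>] by (simp add: m_def mult_ac)
  also have "\<dots> = 1 + lam \<alpha> * integral {0..\<tau>} (\<lambda>\<sigma>. slope (w \<alpha> \<sigma>))"
    using assms abs_w_less_one
    by (subst integral_rescale_01[where g = "\<lambda>\<sigma>. slope (w \<alpha> \<sigma>)"]) (auto intro!: continuous_intros)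
  finally show ?thesis .
qed

lemma h_zero: "h \<alpha> 0 = phi \<alpha> 0 / 2"
  using P_eq_integrals[of 0 \<alpha>] by (simp add: h_def integral_01_mult_left_id)

lemma DERIV_mult_w:
  assumes "\<tau> \<in> {0..1}"
  shows "((\<lambda>\<tau>. \<tau> * w \<alpha> \<tau>) has_real_derivative \<tau> * phi \<alpha> \<tau>) (at \<tau> within {0..1})"
proof -
  have "((\<lambda>x. integral {0..x} (\<lambda>\<sigma>. \<sigma> * phi \<alpha> \<sigma>)) has_real_derivative \<tau> * phi \<alpha> \<tau>) (at \<tau> within {0..1})"
    unfolding has_real_derivative_iff_has_vector_derivative
    using assms by (intro integral_has_vector_derivative continuous_intros)
  then show ?thesis
    using assms by (rule has_field_derivative_transform_within[OF _ zero_less_one])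
                   (simp add: mult_w_eq_integral)
qed

lemma DERIV_m:
  assumes "\<tau> \<in> {0..1}"
  shows "(m \<alpha> has_real_derivative lam \<alpha> * slope (w \<alpha> \<tau>)) (at \<tau> within {0..1})"
proof -
  have "((\<lambda>x. integral {0..x} (\<lambda>\<sigma>. slope (w \<alpha> \<sigma>))) has_real_derivative slope (w \<alpha> \<tau>))
      (at \<tau> within {0..1})"
    unfolding has_real_derivative_iff_has_vector_derivative
    using assms abs_w_less_one by (intro integral_has_vector_derivative continuous_intros) auto
  then have "((\<lambda>x. 1 + lam \<alpha> * integral {0..x} (\<lambda>\<sigma>. slope (w \<alpha> \<sigma>))) has_real_derivative
      lam \<alpha> * slope (w \<alpha> \<tau>)) (at \<tau> within {0..1})"
    by (auto intro!: derivative_eq_intros)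
  then show ?thesis
    using assms by (rule has_field_derivative_transform_within[OF _ zero_less_one])
                   (simp add: m_eq_integral)
qed

lemma DERIV_w:
  assumes \<tau>: "\<tau> \<in> {0..1}"
  shows "(w \<alpha> has_real_derivative phi \<alpha> \<tau> - h \<alpha> \<tau>) (at \<tau> within {0..1})"
proof (cases "\<tau> = 0")
  case True
  have "continuous_on {0..1} (h \<alpha>)"
    using continuous_on_h[of "{0..1}" "\<lambda>_. \<alpha>" "\<lambda>x. x"] by (simp add: continuous_on_id)
  then have "(h \<alpha> \<longlongrightarrow> h \<alpha> 0) (at 0 within {0..1})"
    by (simp add: continuous_on_def)
  then have "((\<lambda>x. (w \<alpha> x - w \<alpha> 0) / (x - 0)) \<longlongrightarrow> h \<alpha> 0) (at 0 within {0..1})"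
    by (rule tendsto_cong[THEN iffD1, rotated]) (auto simp: eventually_at_filter w_eq)
  moreover have "phi \<alpha> 0 - h \<alpha> 0 = h \<alpha> 0"
    using h_zero[of \<alpha>] by simp
  ultimately show ?thesis
    unfolding True has_field_derivative_iff by simp
next
  case False
  with \<tau> have "0 < \<tau>" by simp
  have "((\<lambda>x. x * w \<alpha> x / x) has_real_derivative
      (\<tau> * phi \<alpha> \<tau> * \<tau> - \<tau> * w \<alpha> \<tau> * 1) / (\<tau> * \<tau>)) (at \<tau> within {0..1})"
    using \<open>0 < \<tau>\<close> by (intro DERIV_divide DERIV_mult_w[OF \<tau>] DERIV_ident) simp
  moreover have "(\<tau> * phi \<alpha> \<tau> * \<tau> - \<tau> * w \<alpha> \<tau> * 1) / (\<tau> * \<tau>) = phi \<alpha> \<tau> - h \<alpha> \<tau>"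
    using \<open>0 < \<tau>\<close> w_eq[OF \<tau>] by (simp add: field_simps)
  ultimately have "((\<lambda>x. x * w \<alpha> x / x) has_real_derivative phi \<alpha> \<tau> - h \<alpha> \<tau>) (at \<tau> within {0..1})"
    by simp
  then show ?thesis
  proof (rule has_field_derivative_transform_within[OF _ \<open>0 < \<tau>\<close> \<tau>])
    fix x assume "x \<in> {0..1}" "dist x \<tau> < \<tau>"
    then have "x \<noteq> 0" by (auto simp: dist_real_def)
    then show "x * w \<alpha> x / x = w \<alpha> x" by simp
  qed
qed

definition U :: "real \<Rightarrow> real \<Rightarrow> real \<Rightarrow> real" where
  "U \<alpha> u0 r = u0 * m \<alpha> (r / (u0 * lam \<alpha>))"

definition U1 :: "real \<Rightarrow> real \<Rightarrow> real \<Rightarrow> real" where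
  "U1 \<alpha> u0 r = slope (w \<alpha> (r / (u0 * lam \<alpha>)))"

definition U2 :: "real \<Rightarrow> real \<Rightarrow> real \<Rightarrow> real" where
  "U2 \<alpha> u0 r = (let \<tau> = r / (u0 * lam \<alpha>) in
     (phi \<alpha> \<tau> - h \<alpha> \<tau>) / ((1 - (w \<alpha> \<tau>)\<^sup>2) * sqrt (1 - (w \<alpha> \<tau>)\<^sup>2)) / (u0 * lam \<alpha>))"

lemma DERIV_U:
  assumes "0 < u0" "r \<in> {0..u0 * lam \<alpha>}"
  shows "(U \<alpha> u0 has_real_derivative U1 \<alpha> u0 r) (at r within {0..u0 * lam \<alpha>})"
proof -
  define K where "K = u0 * lam \<alpha>"
  have K: "0 < K"
    unfolding K_def using assms lam_pos by simp
  have "r / K \<in> {0..1}"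
    using assms K by (simp add: K_def)
  then have "((\<lambda>r. m \<alpha> (r / K)) has_real_derivative lam \<alpha> * slope (w \<alpha> (r / K)) / K) (at r within {0..K})"
    using K assms by (intro DERIV_rescale_within DERIV_m) (auto simp: K_def)
  then have "((\<lambda>r. u0 * m \<alpha> (r / K)) has_real_derivative u0 * (lam \<alpha> * slope (w \<alpha> (r / K)) / K))
      (at r within {0..K})"
    by (rule DERIV_cmult)
  moreover have "u0 * (lam \<alpha> * slope (w \<alpha> (r / K)) / K) = U1 \<alpha> u0 r"
    using assms lam_pos[of \<alpha>] by (simp add: K_def U1_def)
  ultimately show ?thesis
    unfolding U_def[abs_def] K_def by simp
qed

lemma DERIV_U1:
  assumes "0 < u0" "r \<in> {0..u0 * lam \<alpha>}"
  shows "(U1 \<alpha> u0 has_real_derivative U2 \<alpha> u0 r) (at r within {0..u0 * lam \<alpha>})"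
proof -
  define K where "K = u0 * lam \<alpha>"
  have K: "0 < K"
    unfolding K_def using assms lam_pos by simp
  have "r / K \<in> {0..1}"
    using assms K by (simp add: K_def)
  then have "((\<lambda>r. w \<alpha> (r / K)) has_real_derivative (phi \<alpha> (r / K) - h \<alpha> (r / K)) / K)
      (at r within {0..K})"
    using K assms by (intro DERIV_rescale_within DERIV_w) (auto simp: K_def)
  then have "((\<lambda>r. slope (w \<alpha> (r / K))) has_real_derivative
      1 / ((1 - (w \<alpha> (r / K))\<^sup>2) * sqrt (1 - (w \<alpha> (r / K))\<^sup>2)) * ((phi \<alpha> (r / K) - h \<alpha> (r / K)) / K))
      (at r within {0..K})"
    by (rule DERIV_chain2[where f = slope and g = "\<lambda>r. w \<alpha> (r / K)" and x = r,
          OF DERIV_slope[OF abs_w_less_one]])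
  then show ?thesis
    unfolding U1_def[abs_def] U2_def K_def[symmetric] by (simp add: Let_def)
qed

lemma U_zero: "U \<alpha> u0 0 = u0"
  using m_eq_integral[of 0 \<alpha>] by (simp add: U_def)

lemma U1_zero: "U1 \<alpha> u0 0 = 0"
  by (simp add: U1_def w_def clamp_real slope_def)

lemma flux_U1_eq: "s * U1 \<alpha> u0 s / sqrt (1 + (U1 \<alpha> u0 s)\<^sup>2) = s * w \<alpha> (s / (u0 * lam \<alpha>))"
proof -
  have "U1 \<alpha> u0 s / sqrt (1 + (U1 \<alpha> u0 s)\<^sup>2) = w \<alpha> (s / (u0 * lam \<alpha>))"
    unfolding U1_def by (rule slope_div_sqrt_one_plus_slope_square[OF abs_w_less_one])
  then show ?thesis
    by (metis times_divide_eq_right)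
qed

lemma profile_rhs_eq:
  assumes "0 < u0"
  shows "\<alpha> * (r * (U \<alpha> u0 r - r * U1 \<alpha> u0 r)) / ((r\<^sup>2 + (U \<alpha> u0 r)\<^sup>2) * sqrt (1 + (U1 \<alpha> u0 r)\<^sup>2))
         = r / (u0 * lam \<alpha>) * phi \<alpha> (r / (u0 * lam \<alpha>))"
proof -
  define \<tau> where "\<tau> = r / (u0 * lam \<alpha>)"
  have r_eq: "r = u0 * lam \<alpha> * \<tau>"
    unfolding \<tau>_def using assms lam_pos[of \<alpha>] by simp
  have profile_eqs: "U \<alpha> u0 r = u0 * m \<alpha> \<tau>" "U1 \<alpha> u0 r = slope (w \<alpha> \<tau>)"
    by (simp_all add: U_def U1_def \<tau>_def)
  have "m \<alpha> \<tau> \<noteq> 0"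
    using abs_m_diff_le[of \<alpha> \<tau>] by auto
  then show ?thesis
    unfolding profile_eqs \<tau>_def[symmetric] unfolding r_eq phi_eq using assms
    by (intro normal_ratio_rescaled abs_w_less_one) auto
qed

lemma DERIV_flux:
  assumes u0: "0 < u0" and r: "r \<in> {0<..<u0 * lam \<alpha>}"
  shows "((\<lambda>s. s * U1 \<alpha> u0 s / sqrt (1 + (U1 \<alpha> u0 s)\<^sup>2)) has_real_derivative
           \<alpha> * (r * (U \<alpha> u0 r - r * U1 \<alpha> u0 r)) / ((r\<^sup>2 + (U \<alpha> u0 r)\<^sup>2) * sqrt (1 + (U1 \<alpha> u0 r)\<^sup>2)))
         (at r)"
proof -
  define K where "K = u0 * lam \<alpha>"
  have K: "0 < K"
    unfolding K_def using u0 lam_pos by simp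
  have "r / K \<in> {0..1}"
    using r K by (simp add: K_def)
  then have "((\<lambda>s. (s / K) * w \<alpha> (s / K)) has_real_derivative r / K * phi \<alpha> (r / K) / K)
      (at r within {0..K})"
    using K r by (intro DERIV_rescale_within DERIV_mult_w) (auto simp: K_def)
  moreover have "at r within {0..K} = at r"
    using r by (intro at_within_Icc_at) (auto simp: K_def)
  ultimately have "((\<lambda>s. (s / K) * w \<alpha> (s / K)) has_real_derivative r / K * phi \<alpha> (r / K) / K) (at r)"
    by simp
  then have "((\<lambda>s. K * ((s / K) * w \<alpha> (s / K))) has_real_derivative K * (r / K * phi \<alpha> (r / K) / K))
      (at r)"
    by (rule DERIV_cmult)
  moreover have "(\<lambda>s. K * ((s / K) * w \<alpha> (s / K))) = (\<lambda>s. s * w \<alpha> (s / K))"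
    and "K * (r / K * phi \<alpha> (r / K) / K) = r / K * phi \<alpha> (r / K)"
    using K by (simp_all add: fun_eq_iff)
  ultimately show ?thesis
    unfolding flux_U1_eq profile_rhs_eq[OF u0] K_def[symmetric] by metis
qed

lemma slope_derivative_denominator_nonzero: "(1 - (w \<alpha> \<tau>)\<^sup>2) * sqrt (1 - (w \<alpha> \<tau>)\<^sup>2) \<noteq> 0"
  using abs_w_less_one[of \<alpha> \<tau>] by (simp add: abs_square_less_1 abs_square_eq_1)

lemma continuous_on_U [continuous_intros]:
  assumes "continuous_on S a" "continuous_on S u" "continuous_on S r" "\<And>x. x \<in> S \<Longrightarrow> 0 < u x"
  shows "continuous_on S (\<lambda>x. U (a x) (u x) (r x))"
proof -
  have "u x * lam (a x) \<noteq> 0" if "x \<in> S" for x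
    using assms(4)[OF that] lam_pos[of "a x"] by simp
  then show ?thesis
    unfolding U_def using assms by (intro continuous_intros) auto
qed

lemma continuous_on_U1 [continuous_intros]:
  assumes "continuous_on S a" "continuous_on S u" "continuous_on S r" "\<And>x. x \<in> S \<Longrightarrow> 0 < u x"
  shows "continuous_on S (\<lambda>x. U1 (a x) (u x) (r x))"
proof -
  have "u x * lam (a x) \<noteq> 0" if "x \<in> S" for x
    using assms(4)[OF that] lam_pos[of "a x"] by simp
  then show ?thesis
    unfolding U1_def using assms abs_w_less_one by (intro continuous_intros) auto
qed

lemma continuous_on_U2 [continuous_intros]:
  assumes "continuous_on S a" "continuous_on S u" "continuous_on S r" "\<And>x. x \<in> S \<Longrightarrow> 0 < u x"
  shows "continuous_on S (\<lambda>x. U2 (a x) (u x) (r x))"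
proof -
  have "u x * lam (a x) \<noteq> 0" if "x \<in> S" for x
    using assms(4)[OF that] lam_pos[of "a x"] by simp
  then show ?thesis
    unfolding U2_def Let_def using assms slope_derivative_denominator_nonzero
    by (intro continuous_intros) auto
qed

lemma profile_solution_U:
  assumes "0 < u0"
  shows "profile_solution \<alpha> u0 (u0 * lam \<alpha>) (U \<alpha> u0) (U1 \<alpha> u0) (U2 \<alpha> u0)"
proof -
  have "continuous_on {0..u0 * lam \<alpha>} (U2 \<alpha> u0)"
    using assms by (intro continuous_intros continuous_on_U2[where r = "\<lambda>r. r", simplified]) auto
  then show ?thesis
    unfolding profile_solution_def is_C2_on_def
    using assms by (simp add: DERIV_U DERIV_U1 DERIV_flux U_zero U1_zero)
qed

lemma profile_continuous_near:
  assumes "0 < v0"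
  shows "\<exists>\<delta>>0. \<exists>\<rho>>0.
    (\<forall>\<alpha> u0. \<bar>\<alpha> - \<alpha>0\<bar> < \<delta> \<and> \<bar>u0 - v0\<bar> < \<delta> \<and> u0 > 0 \<longrightarrow> \<rho> \<le> u0 * lam \<alpha>) \<and>
    continuous_on ({\<alpha>0 - \<delta><..<\<alpha>0 + \<delta>} \<times> ({v0 - \<delta><..<v0 + \<delta>} \<inter> {0<..}) \<times> {0..\<rho>})
      (\<lambda>(\<alpha>, u0, r). (U \<alpha> u0 r, U1 \<alpha> u0 r, U2 \<alpha> u0 r))"
proof (intro exI conjI allI impI)
  show "0 < min 1 (v0 / 2)" "0 < v0 / 2 * lam (\<bar>\<alpha>0\<bar> + 1)"
    using assms lam_pos by auto
  show "continuous_on ({\<alpha>0 - min 1 (v0 / 2)<..<\<alpha>0 + min 1 (v0 / 2)}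
      \<times> ({v0 - min 1 (v0 / 2)<..<v0 + min 1 (v0 / 2)} \<inter> {0<..}) \<times> {0..v0 / 2 * lam (\<bar>\<alpha>0\<bar> + 1)})
      (\<lambda>(\<alpha>, u0, r). (U \<alpha> u0 r, U1 \<alpha> u0 r, U2 \<alpha> u0 r))"
    unfolding case_prod_beta by (intro continuous_intros) auto
  fix \<alpha> u0
  assume "\<bar>\<alpha> - \<alpha>0\<bar> < min 1 (v0 / 2) \<and> \<bar>u0 - v0\<bar> < min 1 (v0 / 2) \<and> 0 < u0"
  then have \<alpha>_near: "\<bar>\<alpha> - \<alpha>0\<bar> < 1" and u0_near: "\<bar>u0 - v0\<bar> < v0 / 2"
    by simp_all
  have "v0 / 2 \<le> u0"
    using u0_near unfolding abs_diff_less_iff by linarith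
  moreover have "lam (\<bar>\<alpha>0\<bar> + 1) \<le> lam \<alpha>"
    using \<alpha>_near abs_triangle_ineq2[of \<alpha> \<alpha>0] by (intro lam_antimono) auto
  ultimately show "v0 / 2 * lam (\<bar>\<alpha>0\<bar> + 1) \<le> u0 * lam \<alpha>"
    using assms lam_pos by (intro mult_mono) (auto intro: less_imp_le)
qed

end

theorem mainTheorem9:
  shows "\<exists>(R :: real \<Rightarrow> real \<Rightarrow> real) (U :: real \<Rightarrow> real \<Rightarrow> real \<Rightarrow> real)
            (U1 :: real \<Rightarrow> real \<Rightarrow> real \<Rightarrow> real) (U2 :: real \<Rightarrow> real \<Rightarrow> real \<Rightarrow> real).
    (\<forall>\<alpha> u0. u0 > 0 \<longrightarrow>
        R \<alpha> u0 > 0 \<and> profile_solution \<alpha> u0 (R \<alpha> u0) (U \<alpha> u0) (U1 \<alpha> u0) (U2 \<alpha> u0)) \<and>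
    (\<forall>\<alpha>0 v0. v0 > 0 \<longrightarrow>
       (\<exists>\<delta>>0. \<exists>\<rho>>0.
          (\<forall>\<alpha> u0. \<bar>\<alpha> - \<alpha>0\<bar> < \<delta> \<and> \<bar>u0 - v0\<bar> < \<delta> \<and> u0 > 0 \<longrightarrow> \<rho> \<le> R \<alpha> u0) \<and>
          continuous_on ({\<alpha>0 - \<delta><..<\<alpha>0 + \<delta>} \<times> ({v0 - \<delta><..<v0 + \<delta>} \<inter> {0<..}) \<times> {0..\<rho>})
            (\<lambda>(\<alpha>, u0, r). (U \<alpha> u0 r, U1 \<alpha> u0 r, U2 \<alpha> u0 r))))"
proof -
  obtain P where "continuous_on UNIV P" "\<And>x. P x = profile_op P x"
    using profile_op_has_fixed_point by blast
  then interpret profile_fixed_point P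
    by unfold_locales
  show ?thesis
    using lam_pos profile_solution_U profile_continuous_near
    by (intro exI[of _ "\<lambda>\<alpha> u0. u0 * lam \<alpha>"] exI[of _ U] exI[of _ U1] exI[of _ U2]) auto
qed

end
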